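(* The pruning map $UT^1(\Sigma)\to T^1(\Sigma)$, $X\mapsto\overline{X}$, is a surjective $(2,1,1,0)$-morphism from $UT^1(\Sigma)$ with unpruned multiplication $\times$, unpruned $( * )$, unpruned $(+)$ and the trivial tree as distinguished identity, to $T^1(\Sigma)$ with pruned multiplication, $*$, $+$ and the trivial tree as distinguished identity. In particular, for all $X,Y\in UT^1(\Sigma)$: $\overline{X\times Y}=\overline{X}\,\overline{Y}$, $\overline{X^{(+)}}=\overline{X}^+$ and $\overline{X^{( * )}}=\overline{X}^*$.
   Context: Let $\Sigma$ be a set. A $\Sigma$-tree is a finite directed graph whose underlying undirected graph is a tree, edges labelled by elements of $\Sigma$, with distinguished start and end vertices such that there is a (possibly empty) directed path from the start vertex to the end vertex. A tree with one vertex is trivial. A morphism $X\to Y$ maps vertices to vertices and edges to edges, preserving initial vertex, terminal vertex and label of each edge, and maps start/end vertex of $X$ to start/end vertex of $Y$; an isomorphism is a morphism bijective on vertices and edges. A retraction is an idempotent morphism $X\to X$, its image (a subtree with the same start and end vertices) being a retract; $X$ is pruned if it has no non-identity retraction. Every tree $X$ has a pruned retract, unique up to isomorphism; its isomorphism type is $\overline{X}$. $UT^1(\Sigma)$ is the set of isomorphism types of $\Sigma$-trees and $T^1(\Sigma)$ that of pruned $\Sigma$-trees. Unpruned operations on $UT^1(\Sigma)$: $X\times Y$ is obtained from disjoint copies of $X$ and $Y$ by identifying the end vertex of $X$ with the start vertex of $Y$, taking start vertex that of $X$ and end vertex that of $Y$; $X^{(+)}$ has the same graph and start vertex as $X$ but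 end vertex equal to its start vertex; $X^{( * )}$ has the same graph and end vertex as $X$ but start vertex equal to its end vertex. Pruned operations on $T^1(\Sigma)$: $XY=\overline{X\times Y}$, $X^+=\overline{X^{(+)}}$, $X^*=\overline{X^{( * )}}$. *)

theory Defs
  imports Main
begin

text \<open>Edges are triples (initial vertex, label, terminal vertex); since the underlying
  undirected (multi)graph of a Sigma-tree is a tree, there are no parallel edges,
  so this loses nothing.\<close>
datatype ('v, 'a) tree = Tree (verts: "'v set") (edges: "('v \<times> 'a \<times> 'v) set") (start: 'v) (fin: 'v)

definition undir_rel :: "('v, 'a) tree \<Rightarrow> ('v \<times> 'v) set" where
  "undir_rel X = {(u, w). \<exists>a. (u, a, w) \<in> edges X \<or> (w, a, u) \<in> edges X}"

definition dir_rel :: "('v, 'a) tree \<Rightarrow> ('v \<times> 'v) set" where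
  "dir_rel X = {(u, w). \<exists>a. (u, a, w) \<in> edges X}"

definition sigma_tree :: "'a set \<Rightarrow> ('v, 'a) tree \<Rightarrow> bool" where
  "sigma_tree S X \<longleftrightarrow>
     finite (verts X) \<and> finite (edges X) \<and>
     edges X \<subseteq> verts X \<times> S \<times> verts X \<and>
     start X \<in> verts X \<and> fin X \<in> verts X \<and>
     (\<forall>u\<in>verts X. \<forall>w\<in>verts X. (u, w) \<in> (undir_rel X)\<^sup>*) \<and>
     card (edges X) + 1 = card (verts X) \<and>
     (start X, fin X) \<in> (dir_rel X)\<^sup>*"

definition emap :: "('v \<Rightarrow> 'w) \<Rightarrow> 'v \<times> 'a \<times> 'v \<Rightarrow> 'w \<times> 'a \<times> 'w" where
  "emap f e = (case e of (u, a, w) \<Rightarrow> (f u, a, f w))"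

text \<open>Morphisms (the edge map is determined by the vertex map, as there are no parallel edges).\<close>
definition tree_morph :: "('v, 'a) tree \<Rightarrow> ('w, 'a) tree \<Rightarrow> ('v \<Rightarrow> 'w) \<Rightarrow> bool" where
  "tree_morph X Y f \<longleftrightarrow>
     f ` verts X \<subseteq> verts Y \<and> emap f ` edges X \<subseteq> edges Y \<and>
     f (start X) = start Y \<and> f (fin X) = fin Y"

definition tree_iso :: "('v, 'a) tree \<Rightarrow> ('w, 'a) tree \<Rightarrow> bool" where
  "tree_iso X Y \<longleftrightarrow> (\<exists>f. tree_morph X Y f \<and> bij_betw f (verts X) (verts Y)
                        \<and> bij_betw (emap f) (edges X) (edges Y))"

definition retraction :: "('v, 'a) tree \<Rightarrow> ('v \<Rightarrow> 'v) \<Rightarrow> bool" where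
  "retraction X f \<longleftrightarrow> tree_morph X X f \<and> (\<forall>v\<in>verts X. f (f v) = f v)"

definition retract_img :: "('v, 'a) tree \<Rightarrow> ('v \<Rightarrow> 'v) \<Rightarrow> ('v, 'a) tree" where
  "retract_img X f = Tree (f ` verts X) (emap f ` edges X) (start X) (fin X)"

definition is_retract :: "('v, 'a) tree \<Rightarrow> ('v, 'a) tree \<Rightarrow> bool" where
  "is_retract P X \<longleftrightarrow> (\<exists>f. retraction X f \<and> P = retract_img X f)"

definition pruned :: "('v, 'a) tree \<Rightarrow> bool" where
  "pruned X \<longleftrightarrow> (\<forall>f. retraction X f \<longrightarrow> (\<forall>v\<in>verts X. f v = v))"

text \<open>P is a pruned retract of X; its isomorphism type is overline X.\<close>
definition is_pruned_retract :: "('v, 'a) tree \<Rightarrow> ('v, 'a) tree \<Rightarrow> bool" where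
  "is_pruned_retract P X \<longleftrightarrow> is_retract P X \<and> pruned P"

definition glue :: "('v, 'a) tree \<Rightarrow> ('w, 'a) tree \<Rightarrow> 'w \<Rightarrow> 'v + 'w" where
  "glue X Y y = (if y = start Y then Inl (fin X) else Inr y)"

definition tprod :: "('v, 'a) tree \<Rightarrow> ('w, 'a) tree \<Rightarrow> ('v + 'w, 'a) tree" where
  "tprod X Y = Tree (Inl ` verts X \<union> glue X Y ` verts Y)
                    (emap Inl ` edges X \<union> emap (glue X Y) ` edges Y)
                    (Inl (start X)) (glue X Y (fin Y))"

definition tplus :: "('v, 'a) tree \<Rightarrow> ('v, 'a) tree" where
  "tplus X = Tree (verts X) (edges X) (start X) (start X)"

definition tstar :: "('v, 'a) tree \<Rightarrow> ('v, 'a) tree" where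
  "tstar X = Tree (verts X) (edges X) (fin X) (fin X)"

definition trivial_tree :: "'v \<Rightarrow> ('v, 'a) tree" where
  "trivial_tree v = Tree {v} {} v v"

end

theory Submission
  imports Defs "HOL-Library.FuncSet"
begin

text \<open>Homomorphically equivalent finite trees have isomorphic pruned retracts: composing with the
  retractions gives mutual morphisms between the pruned retracts, and these are bijective because
  an endomorphism of a finite pruned tree is injective (some power of it is idempotent, hence a
  retraction, hence the identity). The unpruned operations \<open>\<times>\<close>, \<open>(+)\<close> and \<open>( * )\<close> are
  functorial with respect to morphisms, so they preserve homomorphic equivalence; since every
  tree is homomorphically equivalent to each of its retracts, the pruning map commutes with them.\<close>

lemma emap_simp [simp]: "emap f (u, a, w) = (f u, a, f w)"
  by (simp add: emap_def)

lemma emap_id [simp]: "emap id = id"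
  by (auto simp: emap_def fun_eq_iff split: prod.splits)

lemma emap_comp: "emap (g \<circ> f) = emap g \<circ> emap f"
  by (auto simp: emap_def fun_eq_iff split: prod.splits)

definition wf_tree :: "('v, 'a) tree \<Rightarrow> bool" where
  "wf_tree T \<longleftrightarrow> finite (verts T) \<and> finite (edges T) \<and>
     (\<forall>u a w. (u, a, w) \<in> edges T \<longrightarrow> u \<in> verts T \<and> w \<in> verts T)"

lemma sigma_tree_imp_wf_tree: "sigma_tree S X \<Longrightarrow> wf_tree X"
  unfolding sigma_tree_def wf_tree_def by blast

lemma wf_tree_tprod: "wf_tree X \<Longrightarrow> wf_tree Y \<Longrightarrow> wf_tree (tprod X Y)"
  unfolding wf_tree_def tprod_def by force

lemma wf_tree_tplus: "wf_tree X \<Longrightarrow> wf_tree (tplus X)"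
  and wf_tree_tstar: "wf_tree X \<Longrightarrow> wf_tree (tstar X)"
  unfolding wf_tree_def tplus_def tstar_def by auto

lemma wf_tree_trivial_tree: "wf_tree (trivial_tree v)"
  by (simp add: wf_tree_def trivial_tree_def)

lemma inj_on_emap:
  assumes "wf_tree X" "inj_on f (verts X)"
  shows "inj_on (emap f) (edges X)"
proof (rule inj_onI)
  fix x y assume xy: "x \<in> edges X" "y \<in> edges X" "emap f x = emap f y"
  obtain u a w u' a' w' where "x = (u, a, w)" "y = (u', a', w')"
    by (cases x, cases y) auto
  with assms xy show "x = y"
    by (auto simp: wf_tree_def dest: inj_onD)
qed

lemma tree_morph_id: "tree_morph X X id"
  by (simp add: tree_morph_def)

lemma tree_morph_comp:
  assumes "tree_morph X Y f" "tree_morph Y Z g"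
  shows "tree_morph X Z (g \<circ> f)"
  using assms by (force simp: tree_morph_def emap_comp)

lemma tree_morph_funpow: "tree_morph X X f \<Longrightarrow> tree_morph X X (f ^^ n)"
  by (induction n) (auto simp: tree_morph_id intro: tree_morph_comp)

lemma tree_morph_tplus: "tree_morph X Y f \<Longrightarrow> tree_morph (tplus X) (tplus Y) f"
  and tree_morph_tstar: "tree_morph X Y f \<Longrightarrow> tree_morph (tstar X) (tstar Y) f"
  by (auto simp: tree_morph_def tplus_def tstar_def)

definition tprod_map ::
    "('v', 'a) tree \<Rightarrow> ('w', 'a) tree \<Rightarrow> ('v \<Rightarrow> 'v') \<Rightarrow> ('w \<Rightarrow> 'w') \<Rightarrow> 'v + 'w \<Rightarrow> 'v' + 'w'" where
  "tprod_map X' Y' f g = case_sum (Inl \<circ> f) (glue X' Y' \<circ> g)"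

lemma tree_morph_tprod:
  assumes f: "tree_morph X X' f" and g: "tree_morph Y Y' g"
  shows "tree_morph (tprod X Y) (tprod X' Y') (tprod_map X' Y' f g)"
proof -
  let ?h = "tprod_map X' Y' f g"
  have glue: "?h (glue X Y y) = glue X' Y' (g y)" for y
    using f g by (simp add: tprod_map_def glue_def tree_morph_def)
  have Inl: "?h (Inl x) = Inl (f x)" for x
    by (simp add: tprod_map_def)
  have "emap ?h ` emap (glue X Y) ` edges Y \<subseteq> emap (glue X' Y') ` edges Y'"
  proof
    fix e assume "e \<in> emap ?h ` emap (glue X Y) ` edges Y"
    then obtain u a w where uw: "(u, a, w) \<in> edges Y" and e: "e = emap (glue X' Y') (g u, a, g w)"
      by (auto simp: glue)
    have "(g u, a, g w) \<in> edges Y'"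
      using g uw by (force simp: tree_morph_def)
    with e show "e \<in> emap (glue X' Y') ` edges Y'"
      by blast
  qed
  moreover have "emap ?h ` emap Inl ` edges X \<subseteq> emap Inl ` edges X'"
    using f by (force simp: tree_morph_def Inl)
  moreover have "?h ` verts (tprod X Y) \<subseteq> verts (tprod X' Y')"
    using f g by (auto simp: tree_morph_def tprod_def glue Inl)
  moreover have "?h (start (tprod X Y)) = start (tprod X' Y')" "?h (fin (tprod X Y)) = fin (tprod X' Y')"
    using f g by (simp_all add: tree_morph_def tprod_def glue Inl)
  ultimately show ?thesis
    unfolding tree_morph_def tprod_def tree.sel image_Un by blast
qed

definition hom_equiv :: "('v, 'a) tree \<Rightarrow> ('w, 'a) tree \<Rightarrow> bool" where
  "hom_equiv X Y \<longleftrightarrow> (\<exists>f. tree_morph X Y f) \<and> (\<exists>g. tree_morph Y X g)"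

lemma hom_equiv_refl: "hom_equiv X X"
  using tree_morph_id by (auto simp: hom_equiv_def)

lemma hom_equiv_sym: "hom_equiv X Y \<Longrightarrow> hom_equiv Y X"
  by (auto simp: hom_equiv_def)

lemma hom_equiv_trans: "hom_equiv X Y \<Longrightarrow> hom_equiv Y Z \<Longrightarrow> hom_equiv X Z"
  unfolding hom_equiv_def by (meson tree_morph_comp)

lemma hom_equiv_tprod: "hom_equiv X X' \<Longrightarrow> hom_equiv Y Y' \<Longrightarrow> hom_equiv (tprod X Y) (tprod X' Y')"
  unfolding hom_equiv_def by (meson tree_morph_tprod)

lemma hom_equiv_tplus: "hom_equiv X Y \<Longrightarrow> hom_equiv (tplus X) (tplus Y)"
  and hom_equiv_tstar: "hom_equiv X Y \<Longrightarrow> hom_equiv (tstar X) (tstar Y)"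
  unfolding hom_equiv_def by (meson tree_morph_tplus tree_morph_tstar)+

lemma is_retract_refl: "is_retract X X"
proof -
  have "X = retract_img X id" by (cases X) (simp add: retract_img_def)
  then show ?thesis
    unfolding is_retract_def retraction_def by (metis id_apply tree_morph_id)
qed

lemma retract_img_morphs:
  assumes "retraction X r"
  shows "tree_morph X (retract_img X r) r" "tree_morph (retract_img X r) X id"
  using assms by (auto simp: retraction_def tree_morph_def retract_img_def)

lemma hom_equiv_retract: "is_retract P X \<Longrightarrow> hom_equiv X P"
  unfolding is_retract_def hom_equiv_def using retract_img_morphs by blast

lemma wf_tree_retract: "is_retract P X \<Longrightarrow> wf_tree X \<Longrightarrow> wf_tree P"
  unfolding is_retract_def retraction_def tree_morph_def wf_tree_def retract_img_def by force

lemma funpow_image_subset: "f ` V \<subseteq> V \<Longrightarrow> (f ^^ n) ` V \<subseteq> V"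
  by (induction n) auto

lemma funpow_eventually_periodic_on:
  assumes "finite V" "f ` V \<subseteq> V"
  obtains i d where "i \<ge> 1" "d \<ge> 1" "\<forall>v\<in>V. (f ^^ (i + d)) v = (f ^^ i) v"
proof -
  define F where "F n = restrict (f ^^ Suc n) V" for n
  have "range F \<subseteq> V \<rightarrow>\<^sub>E V"
    using funpow_image_subset[OF assms(2)] by (auto simp: F_def image_subset_iff simp del: funpow.simps)
  then have "finite (range F)"
    by (rule finite_subset) (simp add: assms(1) finite_PiE)
  then have "\<not> inj F"
    using finite_imageD infinite_UNIV_nat by auto
  then obtain a b where "a \<noteq> b" "F a = F b"
    unfolding inj_def by blast
  then obtain a b where "a < b" "F a = F b"
    by (cases "a < b") (auto simp: not_less_iff_gr_or_eq)
  then show ?thesis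
    using that[of "Suc a" "b - a"] by (auto simp: F_def restrict_def fun_eq_iff split: if_splits)
qed

lemma funpow_idempotent_power_on:
  assumes "finite V" "f ` V \<subseteq> V"
  obtains k where "k \<ge> 1" "\<forall>v\<in>V. (f ^^ k) ((f ^^ k) v) = (f ^^ k) v"
proof -
  obtain i d where id: "i \<ge> 1" "d \<ge> 1" and period: "\<forall>v\<in>V. (f ^^ (i + d)) v = (f ^^ i) v"
    using funpow_eventually_periodic_on[OF assms] .
  have periods: "(f ^^ (i + t * d)) v = (f ^^ i) v" if "v \<in> V" for t v
  proof (induction t)
    case (Suc t)
    have "i + Suc t * d = t * d + (i + d)" by simp
    then have "(f ^^ (i + Suc t * d)) v = (f ^^ (t * d)) ((f ^^ (i + d)) v)"
      by (simp only: funpow_add comp_apply)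
    also have "\<dots> = (f ^^ (t * d)) ((f ^^ i) v)"
      using period that by simp
    also have "\<dots> = (f ^^ (i + t * d)) v"
      by (simp only: add.commute[of i] funpow_add comp_apply)
    finally show ?case
      using Suc by simp
  qed simp
  \<comment> \<open>a multiple of the period that is at least the preperiod\<close>
  define k where "k = i * d"
  have "(f ^^ k) ((f ^^ k) v) = (f ^^ k) v" if "v \<in> V" for v
  proof -
    have "k + k = (k - i) + (i + i * d)" and "k = (k - i) + i"
      using id by (simp_all add: k_def)
    then show ?thesis
      using periods[OF that, of i] by (metis comp_apply funpow_add)
  qed
  moreover have "k \<ge> 1"
    using id by (simp add: k_def)
  ultimately show ?thesis
    using that by blast
qed

lemma pruned_endomorph_inj_on:
  assumes "finite (verts P)" "pruned P" "tree_morph P P e"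
  shows "inj_on e (verts P)"
proof -
  have "e ` verts P \<subseteq> verts P"
    using assms(3) by (simp add: tree_morph_def)
  then obtain k where k: "k \<ge> 1" "\<forall>v\<in>verts P. (e ^^ k) ((e ^^ k) v) = (e ^^ k) v"
    using funpow_idempotent_power_on assms(1) by blast
  then have "retraction P (e ^^ k)"
    using tree_morph_funpow[OF assms(3)] by (simp add: retraction_def)
  then have "\<forall>v\<in>verts P. (e ^^ k) v = v"
    using assms(2) by (simp add: pruned_def)
  moreover have "e ^^ k = e ^^ (k - 1) \<circ> e"
    using k(1) by (metis Suc_diff_le diff_Suc_1 funpow_Suc_right)
  ultimately show ?thesis
    by (intro inj_on_inverseI[where g = "e ^^ (k - 1)"]) (metis comp_apply)
qed

lemma bij_betw_if_inj_on_both_ways: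
  assumes "finite B" "inj_on f A" "f ` A \<subseteq> B" "inj_on g B" "g ` B \<subseteq> A"
  shows "bij_betw f A B"
proof -
  have "finite A"
    using finite_imageD[OF finite_subset[OF assms(3,1)] assms(2)] .
  then have "card B \<le> card (f ` A)"
    using card_inj_on_le[OF assms(4,5)] card_image[OF assms(2)] by simp
  then have "f ` A = B"
    using assms(1,3) card_seteq by blast
  with assms(2) show ?thesis
    by (simp add: bij_betw_def)
qed

lemma tree_iso_if_pruned_mutual_morphs:
  assumes P: "wf_tree P" "pruned P" and Q: "wf_tree Q" "pruned Q"
    and g: "tree_morph P Q g" and h: "tree_morph Q P h"
  shows "tree_iso P Q"
proof -
  have "inj_on (h \<circ> g) (verts P)" "inj_on (g \<circ> h) (verts Q)"
    using P Q pruned_endomorph_inj_on tree_morph_comp[OF g h] tree_morph_comp[OF h g]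
    by (auto simp: wf_tree_def)
  then have inj: "inj_on g (verts P)" "inj_on h (verts Q)"
    using inj_on_imageI2 by blast+
  have "bij_betw g (verts P) (verts Q)"
    using inj g h Q(1) by (intro bij_betw_if_inj_on_both_ways) (auto simp: tree_morph_def wf_tree_def)
  moreover have "bij_betw (emap g) (edges P) (edges Q)"
    using inj_on_emap[OF P(1) inj(1)] inj_on_emap[OF Q(1) inj(2)] Q(1) g h
    by (intro bij_betw_if_inj_on_both_ways) (auto simp: tree_morph_def wf_tree_def)
  ultimately show ?thesis
    using g unfolding tree_iso_def by blast
qed

lemma tree_iso_pruned_retracts_if_hom_equiv:
  assumes "wf_tree X" "wf_tree Y" "hom_equiv X Y"
    and "is_pruned_retract P X" "is_pruned_retract Q Y"
  shows "tree_iso P Q"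
proof -
  have "hom_equiv P Q"
    using assms hom_equiv_retract hom_equiv_sym hom_equiv_trans
    unfolding is_pruned_retract_def by metis
  moreover have "wf_tree P" "wf_tree Q"
    using assms wf_tree_retract unfolding is_pruned_retract_def by blast+
  ultimately show ?thesis
    using assms(4,5) tree_iso_if_pruned_mutual_morphs
    unfolding hom_equiv_def is_pruned_retract_def by blast
qed

lemma is_pruned_retract_refl: "pruned X \<Longrightarrow> is_pruned_retract X X"
  by (simp add: is_pruned_retract_def is_retract_refl)

lemma pruned_trivial_tree: "pruned (trivial_tree v)"
  by (simp add: pruned_def retraction_def tree_morph_def trivial_tree_def)

theorem theorem4p5:
  fixes S :: "'a set"
  shows
    \<comment> \<open>multiplication: overline(X x Y) = overline(X) overline(Y) = overline(overline X x overline Y)\<close>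
    "(\<forall>(X::('v,'a) tree) (Y::('w,'a) tree) PX PY PXY Q.
        sigma_tree S X \<and> sigma_tree S Y \<and>
        is_pruned_retract PX X \<and> is_pruned_retract PY Y \<and>
        is_pruned_retract PXY (tprod X Y) \<and> is_pruned_retract Q (tprod PX PY)
        \<longrightarrow> tree_iso PXY Q)
   \<and> \<comment> \<open>(+): overline(X^(+)) = overline(X)^+\<close>
    (\<forall>(X::('v,'a) tree) PX P Q.
        sigma_tree S X \<and> is_pruned_retract PX X \<and>
        is_pruned_retract P (tplus X) \<and> is_pruned_retract Q (tplus PX)
        \<longrightarrow> tree_iso P Q)
   \<and> \<comment> \<open>(*): overline(X^( * )) = overline(X)^*\<close>
    (\<forall>(X::('v,'a) tree) PX P Q.
        sigma_tree S X \<and> is_pruned_retract PX X \<and>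
        is_pruned_retract P (tstar X) \<and> is_pruned_retract Q (tstar PX)
        \<longrightarrow> tree_iso P Q)
   \<and> \<comment> \<open>identity: the trivial tree is sent to the trivial tree\<close>
    (\<forall>(v::'v) P. is_pruned_retract P (trivial_tree v :: ('v,'a) tree)
        \<longrightarrow> tree_iso P (trivial_tree v :: ('v,'a) tree))
   \<and> \<comment> \<open>surjectivity: every pruned Sigma-tree is (up to iso) the pruning of some Sigma-tree\<close>
    (\<forall>T::('v,'a) tree. sigma_tree S T \<and> pruned T \<longrightarrow>
        (\<exists>X::('v,'a) tree. sigma_tree S X \<and> (\<exists>P. is_pruned_retract P X \<and> tree_iso P T)))"
proof (intro conjI allI impI)
  have retract: "wf_tree X \<and> wf_tree PX \<and> hom_equiv X PX"
    if "sigma_tree S X" "is_pruned_retract PX X" for X :: "('u, 'a) tree" and PX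
    using that sigma_tree_imp_wf_tree wf_tree_retract hom_equiv_retract
    unfolding is_pruned_retract_def by blast
  show "tree_iso PXY Q"
    if "sigma_tree S X \<and> sigma_tree S Y \<and> is_pruned_retract PX X \<and> is_pruned_retract PY Y \<and>
        is_pruned_retract PXY (tprod X Y) \<and> is_pruned_retract Q (tprod PX PY)"
    for X :: "('v, 'a) tree" and Y :: "('w, 'a) tree" and PX PY PXY Q
    using that retract[of X PX] retract[of Y PY]
      tree_iso_pruned_retracts_if_hom_equiv[of "tprod X Y" "tprod PX PY"]
    by (simp add: wf_tree_tprod hom_equiv_tprod)
  show "tree_iso P Q"
    if "sigma_tree S X \<and> is_pruned_retract PX X \<and>
        is_pruned_retract P (tplus X) \<and> is_pruned_retract Q (tplus PX)"
    for X :: "('v, 'a) tree" and PX P Q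
    using that retract[of X PX] tree_iso_pruned_retracts_if_hom_equiv[of "tplus X" "tplus PX"]
    by (simp add: wf_tree_tplus hom_equiv_tplus)
  show "tree_iso P Q"
    if "sigma_tree S X \<and> is_pruned_retract PX X \<and>
        is_pruned_retract P (tstar X) \<and> is_pruned_retract Q (tstar PX)"
    for X :: "('v, 'a) tree" and PX P Q
    using that retract[of X PX] tree_iso_pruned_retracts_if_hom_equiv[of "tstar X" "tstar PX"]
    by (simp add: wf_tree_tstar hom_equiv_tstar)
  show "tree_iso P (trivial_tree v)" if "is_pruned_retract P (trivial_tree v :: ('v, 'a) tree)" for v P
    by (rule tree_iso_pruned_retracts_if_hom_equiv[OF wf_tree_trivial_tree wf_tree_trivial_tree
        hom_equiv_refl that is_pruned_retract_refl[OF pruned_trivial_tree]])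
  show "\<exists>X :: ('v, 'a) tree. sigma_tree S X \<and> (\<exists>P. is_pruned_retract P X \<and> tree_iso P T)"
    if "sigma_tree S T \<and> pruned T" for T :: "('v, 'a) tree"
  proof -
    have "is_pruned_retract T T" "wf_tree T"
      using that is_pruned_retract_refl sigma_tree_imp_wf_tree by blast+
    then have "tree_iso T T"
      using tree_iso_pruned_retracts_if_hom_equiv[OF _ _ hom_equiv_refl] by blast
    with that \<open>is_pruned_retract T T\<close> show ?thesis
      by blast
  qed
qed

end
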